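(* Let $N\ge 1$. For all $p,q\in\mathcal P$ and every Pauli frame $B=\{(s_i,\tilde s_i)\}_{0\le i<N}$ on $N$ qubits, the relative support satisfies: (1) $\mathrm{Supp}(p,B)\ge 0$, and $\mathrm{Supp}(p,B)=0$ if and only if $p=I$ (the zero vector of $\mathcal P$); (2) $\mathrm{Supp}(p+q,B)\le \mathrm{Supp}(p,B)+\mathrm{Supp}(q,B)$; (3) $\mathrm{Supp}(p,\gamma\cdot B)=\mathrm{Supp}(p,B)$ for every $\gamma\in\bar E_N$ (acting by the backward action); (4) if $p\neq I$, then $\mathrm{Supp}(p,B)-1$ equals the minimum, over all vertices $[B']$ of the coarse-grained graph $[\mathrm{PFG}_N]$ such that some frame in the class $[B']$ has $p$ among its $2N$ entries, of the graph distance in $[\mathrm{PFG}_N]$ from $[B]$ to $[B']$.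
   Context: Pauli space: $\mathcal P$ is the set of $N$-qubit Pauli operators (tensor products of $I,X,Y,Z$) modulo overall phase; it is a $2N$-dimensional vector space over $\mathbb F_2$ with addition $p+q:=pq$ (mod phase) and zero element the identity $I$. The symplectic form $\lambda:\mathcal P\times\mathcal P\to\mathbb F_2$ is $\lambda(p,q)=0$ if $p,q$ commute and $1$ if they anticommute. A Pauli frame is an ordered tuple $B=\{(s_i,\tilde s_i)\}_{0\le i<N}$ of elements of $\mathcal P$ with $\lambda(s_i,s_j)=\lambda(\tilde s_i,\tilde s_j)=0$ and $\lambda(s_i,\tilde s_j)=\delta_{ij}$ for all $i,j$. The origin frame is $B_0=\{(Z_i,X_i)\}_i$. For a frame $B$ let $\phi_B:\mathcal P\to\mathcal P$ be the linear map with $\phi_B(Z_i)=s_i$, $\phi_B(X_i)=\tilde s_i$. The backward action of a Clifford unitary $V$ on a frame $B$ is $V\cdot B:=\{(\phi_B(V^\dagger Z_iV),\phi_B(V^\dagger X_iV))\}_i$ (conjugates taken modulo phase). Relative support: $\mathrm{Supp}(p,B)=\sum_i \big(\lambda(s_i,p)\vee\lambda(\tilde s_i,p)\big)\in\mathbb N$ ($\vee$ = logical OR, sum over integers). $\bar E_N$ is the group of actions on frames generated by the backward actions of $\mathrm{SWAP}_{ij}$, Hadamard $H_i$ and phase gate $P_i=R_Z(\pi/2)$ on qubit $i$, for all $i,j$. The equally entangled frame (EEF) class of $B$ is $[B]=\{\gamma\cdot B:\gamma\in\bar E_N\}$. The coarse-grained Pauli frame graph $[\mathrm{PFG}_N]$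 has the EEF classes as vertices, with $[B_1],[B_2]$ adjacent iff there are $B_1'\in[B_1]$, $B_2'\in[B_2]$ with $B_2'=\mathrm{CX}_{ij}\cdot B_1'$ for some qubits $i\ne j$; distances are unweighted graph distances. *)

theory Defs
  imports Main "HOL-Library.Extended_Nat"
begin

text \<open>N-qubit Pauli operators modulo phase, as vectors over F_2:
  a pair (x, z) of bit-functions on qubit indices; (x i, z i) = (0,0),(1,0),(1,1),(0,1)
  stand for I, X, Y, Z on qubit i.  Addition is pointwise xor (= product mod phase).\<close>

type_synonym pauli = "(nat \<Rightarrow> bool) \<times> (nat \<Rightarrow> bool)"

definition pauli_space :: "nat \<Rightarrow> pauli set" where
  "pauli_space N = {(x, z). \<forall>i\<ge>N. \<not> x i \<and> \<not> z i}"

definition pzero :: pauli where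
  "pzero = (\<lambda>_. False, \<lambda>_. False)"

definition padd :: "pauli \<Rightarrow> pauli \<Rightarrow> pauli" where
  "padd p q = (\<lambda>i. fst p i \<noteq> fst q i, \<lambda>i. snd p i \<noteq> snd q i)"

definition Zop :: "nat \<Rightarrow> pauli" where
  "Zop i = (\<lambda>_. False, \<lambda>k. k = i)"

definition Xop :: "nat \<Rightarrow> pauli" where
  "Xop i = (\<lambda>k. k = i, \<lambda>_. False)"

text \<open>Symplectic form: 1 iff anticommuting.\<close>
definition symp :: "nat \<Rightarrow> pauli \<Rightarrow> pauli \<Rightarrow> bool" where
  "symp N p q = odd (card {i. i < N \<and> ((fst p i \<and> snd q i) \<noteq> (snd p i \<and> fst q i))})"

text \<open>Pauli frames: B i = (s_i, s~_i) for i < N; padded with (I,I) beyond N.\<close>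
type_synonym frame = "nat \<Rightarrow> pauli \<times> pauli"

definition pauli_frame :: "nat \<Rightarrow> frame \<Rightarrow> bool" where
  "pauli_frame N B \<longleftrightarrow>
     (\<forall>i<N. fst (B i) \<in> pauli_space N \<and> snd (B i) \<in> pauli_space N) \<and>
     (\<forall>i<N. \<forall>j<N. \<not> symp N (fst (B i)) (fst (B j)) \<and> \<not> symp N (snd (B i)) (snd (B j)) \<and>
                    (symp N (fst (B i)) (snd (B j)) \<longleftrightarrow> i = j)) \<and>
     (\<forall>i\<ge>N. B i = (pzero, pzero))"

definition origin_frame :: "nat \<Rightarrow> frame" where
  "origin_frame N = (\<lambda>i. if i < N then (Zop i, Xop i) else (pzero, pzero))"

text \<open>The linear map phi_B with phi_B(Z_i) = s_i, phi_B(X_i) = s~_i.\<close>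
definition phi :: "nat \<Rightarrow> frame \<Rightarrow> pauli \<Rightarrow> pauli" where
  "phi N B p = foldr (\<lambda>i acc. padd (padd (if snd p i then fst (B i) else pzero)
                                         (if fst p i then snd (B i) else pzero)) acc)
                     [0..<N] pzero"

text \<open>Clifford gates and their conjugation action on Paulis modulo phase
  (V^dagger P V; for these gates this coincides mod phase with V P V^dagger).\<close>
datatype gate = SWAP nat nat | Had nat | Ph nat | CX nat nat

fun conj :: "gate \<Rightarrow> pauli \<Rightarrow> pauli" where
  "conj (SWAP i j) (x, z) = (x(i := x j, j := x i), z(i := z j, j := z i))"
| "conj (Had i) (x, z) = (x(i := z i), z(i := x i))"
| "conj (Ph i) (x, z) = (x, z(i := (z i \<noteq> x i)))"
| "conj (CX i j) (x, z) = (x(j := (x j \<noteq> x i)), z(i := (z i \<noteq> z j)))"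

definition back_act :: "nat \<Rightarrow> gate \<Rightarrow> frame \<Rightarrow> frame" where
  "back_act N g B = (\<lambda>i. if i < N then (phi N B (conj g (Zop i)), phi N B (conj g (Xop i)))
                          else (pzero, pzero))"

definition local_gates :: "nat \<Rightarrow> gate set" where
  "local_gates N = {SWAP i j | i j. i < N \<and> j < N} \<union> {Had i | i. i < N} \<union> {Ph i | i. i < N}"

text \<open>Elements of \<bar>E_N are represented by words in the generators (the generating
  actions are involutions mod phase, so words give the whole generated group).\<close>
definition act_word :: "nat \<Rightarrow> gate list \<Rightarrow> frame \<Rightarrow> frame" where
  "act_word N gs B = foldr (back_act N) gs B"

definition in_EN :: "nat \<Rightarrow> gate list \<Rightarrow> bool" where
  "in_EN N gs \<longleftrightarrow> set gs \<subseteq> local_gates N"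

definition eef_class :: "nat \<Rightarrow> frame \<Rightarrow> frame set" where
  "eef_class N B = {act_word N gs B | gs. in_EN N gs}"

definition supp :: "nat \<Rightarrow> pauli \<Rightarrow> frame \<Rightarrow> nat" where
  "supp N p B = card {i. i < N \<and> (symp N (fst (B i)) p \<or> symp N (snd (B i)) p)}"

definition cg_vertices :: "nat \<Rightarrow> frame set set" where
  "cg_vertices N = {eef_class N B | B. pauli_frame N B}"

definition cg_adj :: "nat \<Rightarrow> frame set \<Rightarrow> frame set \<Rightarrow> bool" where
  "cg_adj N C1 C2 \<longleftrightarrow> C1 \<in> cg_vertices N \<and> C2 \<in> cg_vertices N \<and>
     (\<exists>B1\<in>C1. \<exists>B2\<in>C2. \<exists>i<N. \<exists>j<N. i \<noteq> j \<and> B2 = back_act N (CX i j) B1)"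

text \<open>Unweighted graph distance (infinity if unreachable).\<close>
definition cg_dist :: "nat \<Rightarrow> frame set \<Rightarrow> frame set \<Rightarrow> enat" where
  "cg_dist N C1 C2 = (INF n \<in> {n. (cg_adj N ^^ n) C1 C2}. enat n)"

definition contains_pauli :: "nat \<Rightarrow> pauli \<Rightarrow> frame set \<Rightarrow> bool" where
  "contains_pauli N p C \<longleftrightarrow> (\<exists>B'\<in>C. \<exists>i<N. fst (B' i) = p \<or> snd (B' i) = p)"

end

theory Submission
  imports Defs "HOL-Combinatorics.Transposition"
begin

text \<open>Expanding p in the frame B, the support counts the qubits i on which p has a nonzero
  coordinate pair (its commutation with s_i and with s~_i); this description is faithful because
  the symplectic form is nondegenerate on Pauli space. Local gates only permute qubits or act
  invertibly on one coordinate pair, so they preserve the support. A CX changes the pairs of two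
  qubits and cannot clear both, so it lowers the support by at most one; conversely, after local
  gates have brought the pairs of two supported qubits to the form (1,0), a CX clears one of them.
  A support of one means that, up to local gates, p is itself an entry of the frame.\<close>

lemma fst_padd [simp]: "fst (padd p q) i = (fst p i \<noteq> fst q i)"
  by (simp add: padd_def)

lemma snd_padd [simp]: "snd (padd p q) i = (snd p i \<noteq> snd q i)"
  by (simp add: padd_def)

lemma fst_pzero [simp]: "fst pzero i = False"
  by (simp add: pzero_def)

lemma snd_pzero [simp]: "snd pzero i = False"
  by (simp add: pzero_def)

lemma pauli_eqI: "(\<And>i. fst p i = fst q i) \<Longrightarrow> (\<And>i. snd p i = snd q i) \<Longrightarrow> p = q"
  by (simp add: prod_eq_iff fun_eq_iff)

lemma pauli_space_iff: "p \<in> pauli_space N \<longleftrightarrow> (\<forall>i\<ge>N. \<not> fst p i \<and> \<not> snd p i)"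
  by (cases p) (simp add: pauli_space_def)

lemma padd_in_pauli_space [simp]:
  "p \<in> pauli_space N \<Longrightarrow> q \<in> pauli_space N \<Longrightarrow> padd p q \<in> pauli_space N"
  by (simp add: pauli_space_iff)

lemma pzero_in_pauli_space [simp]: "pzero \<in> pauli_space N"
  by (simp add: pauli_space_iff)

lemma finite_pauli_space: "finite (pauli_space N)"
proof -
  let ?F = "(\<lambda>A i. i \<in> A) ` Pow {..<N}"
  have F: "f \<in> ?F" if "\<forall>i\<ge>N. \<not> f i" for f :: "nat \<Rightarrow> bool"
  proof
    show "f = (\<lambda>i. i \<in> {i. f i})" by simp
  qed (use that not_less in auto)
  have "pauli_space N \<subseteq> ?F \<times> ?F"
    by (auto simp: pauli_space_iff intro!: F)
  then show ?thesis
    by (rule finite_subset) simp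
qed

lemma card_Collect_less_Suc:
  "card {i. i < Suc n \<and> P i} = card {i. i < n \<and> P i} + (if P n then 1 else 0)"
proof -
  have "{i. i < Suc n \<and> P i} = (if P n then insert n else id) {i. i < n \<and> P i}"
    by (auto simp: less_Suc_eq)
  then show ?thesis by simp
qed

lemma odd_card_Collect_xor:
  "odd (card {i. i < (n::nat) \<and> (P i \<noteq> Q i)}) \<longleftrightarrow>
     odd (card {i. i < n \<and> P i}) \<noteq> odd (card {i. i < n \<and> Q i})"
  by (induction n) (auto simp: card_Collect_less_Suc)

lemma symp_padd_left [simp]: "symp N (padd p p') q \<longleftrightarrow> symp N p q \<noteq> symp N p' q"
proof -
  have "symp N (padd p p') q \<longleftrightarrow> odd (card {i. i < N \<and>
      (((fst p i \<and> snd q i) \<noteq> (snd p i \<and> fst q i)) \<noteq> ((fst p' i \<and> snd q i) \<noteq> (snd p' i \<and> fst q i)))})"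
    unfolding symp_def by (intro arg_cong[where f = "\<lambda>A. odd (card A)"]) auto
  then show ?thesis
    unfolding odd_card_Collect_xor symp_def .
qed

lemma symp_commute: "symp N p q = symp N q p"
  unfolding symp_def by (intro arg_cong[where f = "\<lambda>A. odd (card A)"]) auto

lemma symp_padd_right [simp]: "symp N q (padd p p') \<longleftrightarrow> symp N q p \<noteq> symp N q p'"
  using symp_padd_left symp_commute by metis

lemma symp_self [simp]: "\<not> symp N p p"
proof -
  have "{i. i < N \<and> ((fst p i \<and> snd p i) \<noteq> (snd p i \<and> fst p i))} = {}" by auto
  then show ?thesis unfolding symp_def by (simp only: card.empty) simp
qed

lemma symp_pzero [simp]: "\<not> symp N pzero q" "\<not> symp N q pzero"
  unfolding symp_def by auto

lemma symp_foldr_padd: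
  "symp N s (foldr (\<lambda>i. padd (t i)) xs pzero) \<longleftrightarrow> odd (length (filter (\<lambda>i. symp N s (t i)) xs))"
  by (induction xs) auto

lemma foldr_padd_in_pauli_space:
  "(\<And>i. i \<in> set xs \<Longrightarrow> t i \<in> pauli_space N) \<Longrightarrow> foldr (\<lambda>i. padd (t i)) xs pzero \<in> pauli_space N"
  by (induction xs) auto

lemma pauli_frame_symp:
  assumes "pauli_frame N B" "i < N" "j < N"
  shows "\<not> symp N (fst (B i)) (fst (B j))" "\<not> symp N (snd (B i)) (snd (B j))"
    "symp N (fst (B i)) (snd (B j)) \<longleftrightarrow> i = j" "symp N (snd (B i)) (fst (B j)) \<longleftrightarrow> i = j"
  using assms unfolding pauli_frame_def by (metis symp_commute)+

lemma pauli_frame_in_pauli_space: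
  "pauli_frame N B \<Longrightarrow> i < N \<Longrightarrow> fst (B i) \<in> pauli_space N \<and> snd (B i) \<in> pauli_space N"
  unfolding pauli_frame_def by blast

lemma pauli_frameI:
  assumes "\<And>i. i < N \<Longrightarrow> fst (B i) \<in> pauli_space N \<and> snd (B i) \<in> pauli_space N"
    and "\<And>i j. i < N \<Longrightarrow> j < N \<Longrightarrow> \<not> symp N (fst (B i)) (fst (B j)) \<and>
           \<not> symp N (snd (B i)) (snd (B j)) \<and> (symp N (fst (B i)) (snd (B j)) \<longleftrightarrow> i = j)"
    and "\<And>i. \<not> i < N \<Longrightarrow> B i = (pzero, pzero)"
  shows "pauli_frame N B"
  using assms unfolding pauli_frame_def by (auto simp: not_less[symmetric])

lemma odd_length_filter_upt_eq:
  "odd (length (filter (\<lambda>i. i = k \<and> P) [0..<N])) \<longleftrightarrow> k < N \<and> P"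
  by (cases "k < N") (auto simp: distinct_length_filter Collect_conj_eq)

lemma symp_fst_frame_phi:
  assumes "pauli_frame N B" "k < N"
  shows "symp N (fst (B k)) (phi N B c) \<longleftrightarrow> fst c k"
proof -
  have "filter (\<lambda>i. symp N (fst (B k)) (padd (if snd c i then fst (B i) else pzero)
          (if fst c i then snd (B i) else pzero))) [0..<N] = filter (\<lambda>i. i = k \<and> fst c k) [0..<N]"
    using pauli_frame_symp[OF assms(1) assms(2)] by (intro filter_cong) auto
  then show ?thesis
    using assms(2) by (simp add: phi_def symp_foldr_padd odd_length_filter_upt_eq)
qed

lemma symp_snd_frame_phi:
  assumes "pauli_frame N B" "k < N"
  shows "symp N (snd (B k)) (phi N B c) \<longleftrightarrow> snd c k"
proof -
  have "filter (\<lambda>i. symp N (snd (B k)) (padd (if snd c i then fst (B i) else pzero)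
          (if fst c i then snd (B i) else pzero))) [0..<N] = filter (\<lambda>i. i = k \<and> snd c k) [0..<N]"
    using pauli_frame_symp[OF assms(1) assms(2)] by (intro filter_cong) auto
  then show ?thesis
    using assms(2) by (simp add: phi_def symp_foldr_padd odd_length_filter_upt_eq)
qed

lemma phi_in_pauli_space: "pauli_frame N B \<Longrightarrow> phi N B c \<in> pauli_space N"
  unfolding phi_def by (rule foldr_padd_in_pauli_space) (simp add: pauli_frame_in_pauli_space)

lemma phi_inj_on:
  assumes "pauli_frame N B"
  shows "inj_on (phi N B) (pauli_space N)"
proof (rule inj_onI)
  fix c c'
  assume c: "c \<in> pauli_space N" and c': "c' \<in> pauli_space N" and eq: "phi N B c = phi N B c'"
  show "c = c'"
  proof (rule pauli_eqI)
    fix k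
    show "fst c k = fst c' k" "snd c k = snd c' k"
      using c c' eq symp_fst_frame_phi[OF assms] symp_snd_frame_phi[OF assms]
      by (cases "k < N"; metis not_less pauli_space_iff)+
  qed
qed

lemma phi_image:
  assumes "pauli_frame N B"
  shows "phi N B ` pauli_space N = pauli_space N"
  using finite_pauli_space phi_in_pauli_space[OF assms] phi_inj_on[OF assms]
  by (intro endo_inj_surj) auto

lemma pauli_eq_by_frame:
  assumes B: "pauli_frame N B" and "p \<in> pauli_space N" "q \<in> pauli_space N"
    and same: "\<And>k. k < N \<Longrightarrow> (symp N (fst (B k)) p \<longleftrightarrow> symp N (fst (B k)) q) \<and>
                                  (symp N (snd (B k)) p \<longleftrightarrow> symp N (snd (B k)) q)"
  shows "p = q"
proof -
  obtain c c' where c: "c \<in> pauli_space N" "p = phi N B c" and c': "c' \<in> pauli_space N" "q = phi N B c'"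
    using assms(2,3) phi_image[OF B] by (metis imageE)
  have "c = c'"
  proof (rule pauli_eqI)
    fix k
    show "fst c k = fst c' k" "snd c k = snd c' k"
      using c c' same[of k] symp_fst_frame_phi[OF B] symp_snd_frame_phi[OF B]
      by (cases "k < N"; metis not_less pauli_space_iff)+
  qed
  then show ?thesis
    using c c' by simp
qed

text \<open>Since the frame is a symplectic basis, identities for phi follow by comparing commutation
  patterns with the frame, without unfolding the fold in its definition.\<close>

lemma phi_Zop:
  assumes "pauli_frame N B" "i < N"
  shows "phi N B (Zop i) = fst (B i)"
  using assms pauli_frame_symp[OF assms(1) _ assms(2)]
  by (intro pauli_eq_by_frame[OF assms(1)])
     (auto simp: phi_in_pauli_space pauli_frame_in_pauli_space symp_fst_frame_phi symp_snd_frame_phi Zop_def)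

lemma phi_Xop:
  assumes "pauli_frame N B" "i < N"
  shows "phi N B (Xop i) = snd (B i)"
  using assms pauli_frame_symp[OF assms(1) _ assms(2)]
  by (intro pauli_eq_by_frame[OF assms(1)])
     (auto simp: phi_in_pauli_space pauli_frame_in_pauli_space symp_fst_frame_phi symp_snd_frame_phi Xop_def)

lemma phi_padd:
  assumes "pauli_frame N B"
  shows "phi N B (padd c c') = padd (phi N B c) (phi N B c')"
  by (intro pauli_eq_by_frame[OF assms])
     (simp_all add: assms phi_in_pauli_space symp_fst_frame_phi symp_snd_frame_phi)

lemma conj_Had_Zop: "conj (Had k) (Zop i) = (if i = k then Xop i else Zop i)"
  by (auto simp: Zop_def Xop_def fun_eq_iff)

lemma conj_Had_Xop: "conj (Had k) (Xop i) = (if i = k then Zop i else Xop i)"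
  by (auto simp: Zop_def Xop_def fun_eq_iff)

lemma conj_Ph_Zop: "conj (Ph k) (Zop i) = Zop i"
  by (auto simp: Zop_def fun_eq_iff)

lemma conj_Ph_Xop: "conj (Ph k) (Xop i) = (if i = k then padd (Zop i) (Xop i) else Xop i)"
  by (auto simp: Zop_def Xop_def padd_def fun_eq_iff)

lemma conj_SWAP_Zop: "conj (SWAP a b) (Zop i) = Zop (transpose a b i)"
  by (auto simp: Zop_def transpose_def fun_eq_iff)

lemma conj_SWAP_Xop: "conj (SWAP a b) (Xop i) = Xop (transpose a b i)"
  by (auto simp: Xop_def transpose_def fun_eq_iff)

lemma conj_CX_Zop: "a \<noteq> b \<Longrightarrow> conj (CX a b) (Zop i) = (if i = b then padd (Zop a) (Zop b) else Zop i)"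
  by (auto simp: Zop_def padd_def fun_eq_iff)

lemma conj_CX_Xop: "a \<noteq> b \<Longrightarrow> conj (CX a b) (Xop i) = (if i = a then padd (Xop a) (Xop b) else Xop i)"
  by (auto simp: Xop_def padd_def fun_eq_iff)

lemma back_act_beyond: "\<not> i < N \<Longrightarrow> back_act N g B i = (pzero, pzero)"
  by (simp add: back_act_def)

lemma transpose_less: "a < N \<Longrightarrow> b < N \<Longrightarrow> i < N \<Longrightarrow> transpose a b i < (N::nat)"
  by (simp add: transpose_def)

context
  fixes N :: nat and B :: frame
  assumes B: "pauli_frame N B"
begin

lemma back_act_Had:
  "i < N \<Longrightarrow> back_act N (Had k) B i = (if i = k then (snd (B i), fst (B i)) else B i)"
  by (simp add: back_act_def conj_Had_Zop conj_Had_Xop phi_Zop phi_Xop B)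

lemma back_act_Ph:
  "i < N \<Longrightarrow> back_act N (Ph k) B i =
     (fst (B i), if i = k then padd (fst (B i)) (snd (B i)) else snd (B i))"
  by (simp add: back_act_def conj_Ph_Zop conj_Ph_Xop phi_Zop phi_Xop phi_padd B)

lemma back_act_SWAP:
  "i < N \<Longrightarrow> a < N \<Longrightarrow> b < N \<Longrightarrow> back_act N (SWAP a b) B i = B (transpose a b i)"
  by (simp add: back_act_def conj_SWAP_Zop conj_SWAP_Xop phi_Zop phi_Xop B transpose_less)

lemma back_act_CX:
  "i < N \<Longrightarrow> a < N \<Longrightarrow> b < N \<Longrightarrow> a \<noteq> b \<Longrightarrow> back_act N (CX a b) B i =
     (if i = b then padd (fst (B a)) (fst (B b)) else fst (B i),
      if i = a then padd (snd (B a)) (snd (B b)) else snd (B i))"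
  by (simp add: back_act_def conj_CX_Zop conj_CX_Xop phi_Zop phi_Xop phi_padd B)

end

definition supp_set :: "nat \<Rightarrow> pauli \<Rightarrow> frame \<Rightarrow> nat set" where
  "supp_set N p B = {i. i < N \<and> (symp N (fst (B i)) p \<or> symp N (snd (B i)) p)}"

lemma supp_eq_card_supp_set: "supp N p B = card (supp_set N p B)"
  by (simp add: supp_def supp_set_def)

lemma finite_supp_set [simp]: "finite (supp_set N p B)"
  by (simp add: supp_set_def)

lemma local_gatesE:
  assumes "g \<in> local_gates N"
  obtains a b where "g = SWAP a b" "a < N" "b < N" | k where "g = Had k" "k < N"
    | k where "g = Ph k" "k < N"
  using assms unfolding local_gates_def by blast

lemma Had_in_local_gates: "k < N \<Longrightarrow> Had k \<in> local_gates N"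
  by (simp add: local_gates_def)

lemma Ph_in_local_gates: "k < N \<Longrightarrow> Ph k \<in> local_gates N"
  by (simp add: local_gates_def)

context
  fixes N :: nat and B :: frame
  assumes B: "pauli_frame N B"
begin

lemma supp_back_act_local:
  assumes "g \<in> local_gates N"
  shows "supp N p (back_act N g B) = supp N p B"
  using assms
proof (cases rule: local_gatesE)
  case (1 a b)
  have "i \<in> supp_set N p (back_act N g B) \<longleftrightarrow> transpose a b i \<in> supp_set N p B" for i
  proof (cases "i < N")
    case True
    then show ?thesis using 1 by (simp add: supp_set_def back_act_SWAP[OF B] transpose_less)
  next
    case False
    then have "transpose a b i = i" using 1 by auto
    then show ?thesis using False by (simp add: supp_set_def)
  qed
  then have "supp_set N p (back_act N g B) = transpose a b ` supp_set N p B"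
    by (simp add: set_eq_iff in_transpose_image_iff)
  then show ?thesis
    by (simp add: supp_eq_card_supp_set card_image)
next
  case (2 k)
  then have "supp_set N p (back_act N g B) = supp_set N p B"
    by (auto simp: supp_set_def back_act_Had[OF B] split: if_splits)
  then show ?thesis
    by (simp add: supp_eq_card_supp_set)
next
  case (3 k)
  then have "supp_set N p (back_act N g B) = supp_set N p B"
    by (auto simp: supp_set_def back_act_Ph[OF B] split: if_splits)
  then show ?thesis
    by (simp add: supp_eq_card_supp_set)
qed

lemma pauli_frame_back_act_local:
  assumes "g \<in> local_gates N"
  shows "pauli_frame N (back_act N g B)"
  using assms
proof (cases rule: local_gatesE)
  case (1 a b)
  then show ?thesis
    by (intro pauli_frameI) (auto simp: back_act_SWAP[OF B] transpose_less pauli_frame_in_pauli_space[OF B]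
        pauli_frame_symp[OF B] back_act_beyond transpose_eq_iff)
next
  case (2 k)
  then show ?thesis
    by (intro pauli_frameI) (auto simp: back_act_Had[OF B] pauli_frame_in_pauli_space[OF B]
        pauli_frame_symp[OF B] back_act_beyond)
next
  case (3 k)
  then show ?thesis
    by (intro pauli_frameI) (auto simp: back_act_Ph[OF B] pauli_frame_in_pauli_space[OF B]
        pauli_frame_symp[OF B] back_act_beyond)
qed

lemma pauli_frame_back_act_CX:
  "a < N \<Longrightarrow> b < N \<Longrightarrow> a \<noteq> b \<Longrightarrow> pauli_frame N (back_act N (CX a b) B)"
  by (intro pauli_frameI) (auto simp: back_act_CX[OF B] pauli_frame_in_pauli_space[OF B]
      pauli_frame_symp[OF B] back_act_beyond)

end

lemma act_word_Nil [simp]: "act_word N [] B = B"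
  by (simp add: act_word_def)

lemma act_word_Cons [simp]: "act_word N (g # gs) B = back_act N g (act_word N gs B)"
  by (simp add: act_word_def)

lemma act_word_append: "act_word N (gs @ hs) B = act_word N gs (act_word N hs B)"
  by (simp add: act_word_def)

lemma in_EN_Nil [simp]: "in_EN N []"
  by (simp add: in_EN_def)

lemma in_EN_Cons [simp]: "in_EN N (g # gs) \<longleftrightarrow> g \<in> local_gates N \<and> in_EN N gs"
  by (simp add: in_EN_def)

lemma in_EN_append [simp]: "in_EN N (gs @ hs) \<longleftrightarrow> in_EN N gs \<and> in_EN N hs"
  by (auto simp: in_EN_def)

lemma pauli_frame_act_word: "pauli_frame N B \<Longrightarrow> in_EN N gs \<Longrightarrow> pauli_frame N (act_word N gs B)"
  by (induction gs) (auto simp: pauli_frame_back_act_local)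

lemma supp_act_word:
  "pauli_frame N B \<Longrightarrow> in_EN N gs \<Longrightarrow> supp N p (act_word N gs B) = supp N p B"
  by (induction gs) (auto simp: supp_back_act_local pauli_frame_act_word)

lemma mem_eef_class_self: "B \<in> eef_class N B"
  unfolding eef_class_def by (auto intro: exI[of _ "[]"])

lemma act_word_in_eef_class: "in_EN N gs \<Longrightarrow> act_word N gs B \<in> eef_class N B"
  unfolding eef_class_def by blast

lemma supp_eef_class: "pauli_frame N B \<Longrightarrow> B' \<in> eef_class N B \<Longrightarrow> supp N p B' = supp N p B"
  unfolding eef_class_def by (auto simp: supp_act_word)

lemma eef_class_in_cg_vertices: "pauli_frame N B \<Longrightarrow> eef_class N B \<in> cg_vertices N"
  unfolding cg_vertices_def by blast

lemma supp_le_Suc_supp_back_act_CX: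
  assumes B: "pauli_frame N B" and ab: "a < N" "b < N" "a \<noteq> b"
  shows "supp N p B \<le> Suc (supp N p (back_act N (CX a b) B))"
proof -
  let ?A = "supp_set N p B" and ?A' = "supp_set N p (back_act N (CX a b) B)"
  have outside: "i \<in> ?A \<longleftrightarrow> i \<in> ?A'" if "i \<noteq> a" "i \<noteq> b" for i
    using that ab by (cases "i < N") (simp_all add: supp_set_def back_act_CX[OF B])
  have both: "a \<notin> ?A \<and> b \<notin> ?A" if "a \<notin> ?A'" "b \<notin> ?A'"
    using that ab by (auto simp: supp_set_def back_act_CX[OF B])
  have "?A \<subseteq> insert (if a \<in> ?A' then b else a) ?A'"
  proof
    fix i
    assume "i \<in> ?A"
    then show "i \<in> insert (if a \<in> ?A' then b else a) ?A'"
      using outside[of i] both by (cases "i = a \<or> i = b") auto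
  qed
  then have "card ?A \<le> card (insert (if a \<in> ?A' then b else a) ?A')"
    by (rule card_mono[rotated]) simp
  also have "\<dots> \<le> Suc (card ?A')"
    by (simp add: card_insert_if)
  finally show ?thesis
    by (simp add: supp_eq_card_supp_set)
qed

definition aligned :: "nat \<Rightarrow> pauli \<Rightarrow> frame \<Rightarrow> nat \<Rightarrow> bool" where
  "aligned N p B k \<longleftrightarrow> symp N (fst (B k)) p \<and> \<not> symp N (snd (B k)) p"

lemma aligned_in_supp_set: "aligned N p B k \<Longrightarrow> k < N \<Longrightarrow> k \<in> supp_set N p B"
  by (simp add: aligned_def supp_set_def)

lemma exists_local_word_aligning:
  assumes B: "pauli_frame N B" and k: "k \<in> supp_set N p B"
  shows "\<exists>gs. in_EN N gs \<and> (\<forall>l<N. l \<noteq> k \<longrightarrow> act_word N gs B l = B l) \<and>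
           aligned N p (act_word N gs B) k"
proof -
  have kN: "k < N" using k by (simp add: supp_set_def)
  consider "aligned N p B k" | "\<not> symp N (fst (B k)) p" "symp N (snd (B k)) p"
    | "symp N (fst (B k)) p" "symp N (snd (B k)) p"
    using k by (auto simp: supp_set_def aligned_def)
  then show ?thesis
  proof cases
    case 1
    then show ?thesis by (intro exI[of _ "[]"]) simp
  next
    case 2
    then show ?thesis
      using kN by (intro exI[of _ "[Had k]"]) (simp add: Had_in_local_gates back_act_Had[OF B] aligned_def)
  next
    case 3
    then show ?thesis
      using kN by (intro exI[of _ "[Ph k]"]) (simp add: Ph_in_local_gates back_act_Ph[OF B] aligned_def)
  qed
qed

lemma supp_set_back_act_CX_aligned:
  assumes B: "pauli_frame N B" and ab: "a < N" "b < N" "a \<noteq> b"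
    and "aligned N p B a" "aligned N p B b"
  shows "supp_set N p (back_act N (CX a b) B) = supp_set N p B - {b}"
proof (rule set_eqI)
  fix i
  show "i \<in> supp_set N p (back_act N (CX a b) B) \<longleftrightarrow> i \<in> supp_set N p B - {b}"
    using assms by (cases "i < N") (auto simp: supp_set_def back_act_CX[OF B] aligned_def)
qed

lemma exists_CX_decreasing_supp:
  assumes B: "pauli_frame N B" and two: "2 \<le> supp N p B"
  shows "\<exists>gs a b. in_EN N gs \<and> a < N \<and> b < N \<and> a \<noteq> b \<and>
           Suc (supp N p (back_act N (CX a b) (act_word N gs B))) = supp N p B"
proof -
  have "\<not> card (supp_set N p B) \<le> Suc 0"
    using two by (simp add: supp_eq_card_supp_set)
  then obtain a b where a: "a \<in> supp_set N p B" and b: "b \<in> supp_set N p B" and "a \<noteq> b"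
    using card_le_Suc0_iff_eq[OF finite_supp_set] by blast
  then have ab: "a < N" "b < N" "a \<noteq> b" by (auto simp: supp_set_def)
  obtain gs1 where gs1: "in_EN N gs1" "\<forall>l<N. l \<noteq> b \<longrightarrow> act_word N gs1 B l = B l"
      "aligned N p (act_word N gs1 B) b"
    using exists_local_word_aligning[OF B b] by blast
  define B1 where "B1 = act_word N gs1 B"
  have B1: "pauli_frame N B1"
    unfolding B1_def by (rule pauli_frame_act_word[OF B gs1(1)])
  have "a \<in> supp_set N p B1"
    using a ab gs1(2) by (simp add: supp_set_def B1_def)
  then obtain gs2 where gs2: "in_EN N gs2" "\<forall>l<N. l \<noteq> a \<longrightarrow> act_word N gs2 B1 l = B1 l"
      "aligned N p (act_word N gs2 B1) a"
    using exists_local_word_aligning[OF B1] by blast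
  define B2 where "B2 = act_word N gs2 B1"
  have B2: "pauli_frame N B2" and B2_eq: "B2 = act_word N (gs2 @ gs1) B"
    using pauli_frame_act_word[OF B1 gs2(1)] by (simp_all add: B2_def B1_def act_word_append)
  have "B2 b = B1 b"
    using gs2(2) ab by (simp add: B2_def)
  then have aligned: "aligned N p B2 a" "aligned N p B2 b"
    using gs1(3) gs2(3) by (simp_all add: B2_def B1_def aligned_def)
  have "Suc (supp N p (back_act N (CX a b) B2)) = supp N p B2"
    unfolding supp_eq_card_supp_set supp_set_back_act_CX_aligned[OF B2 ab aligned]
    by (rule card_Suc_Diff1[OF finite_supp_set aligned_in_supp_set[OF aligned(2) ab(2)]])
  also have "\<dots> = supp N p B"
    using B2_eq supp_act_word[OF B] gs1(1) gs2(1) by simp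
  finally show ?thesis
    using ab gs1(1) gs2(1) B2_eq by (intro exI[of _ "gs2 @ gs1"] exI[of _ a] exI[of _ b]) simp
qed

lemma supp_eq_0_iff:
  assumes "pauli_frame N B" "p \<in> pauli_space N"
  shows "supp N p B = 0 \<longleftrightarrow> p = pzero"
proof
  assume "supp N p B = 0"
  then show "p = pzero"
    using assms by (intro pauli_eq_by_frame[OF assms(1)]) (auto simp: supp_eq_card_supp_set supp_set_def)
qed (simp add: supp_def)

lemma supp_padd_le: "supp N (padd p q) B \<le> supp N p B + supp N q B"
proof -
  have "supp_set N (padd p q) B \<subseteq> supp_set N p B \<union> supp_set N q B"
    by (auto simp: supp_set_def)
  then have "card (supp_set N (padd p q) B) \<le> card (supp_set N p B \<union> supp_set N q B)"
    by (rule card_mono[rotated]) simp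
  also have "\<dots> \<le> card (supp_set N p B) + card (supp_set N q B)"
    by (rule card_Un_le)
  finally show ?thesis
    by (simp add: supp_eq_card_supp_set)
qed

lemma supp_le_1_if_contains_pauli:
  assumes B: "pauli_frame N B" and "contains_pauli N p (eef_class N B)"
  shows "supp N p B \<le> 1"
proof -
  obtain gs k where gs: "in_EN N gs" "k < N" "fst (act_word N gs B k) = p \<or> snd (act_word N gs B k) = p"
    using assms(2) unfolding contains_pauli_def eef_class_def by blast
  have "supp_set N p (act_word N gs B) \<subseteq> {k}"
    using gs pauli_frame_symp[OF pauli_frame_act_word[OF B gs(1)] _ gs(2)] by (auto simp: supp_set_def)
  then have "supp N p (act_word N gs B) \<le> 1"
    using card_mono[of "{k}"] by (simp add: supp_eq_card_supp_set)
  then show ?thesis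
    using supp_act_word[OF B gs(1)] by simp
qed

lemma contains_pauli_if_supp_eq_1:
  assumes B: "pauli_frame N B" and p: "p \<in> pauli_space N" and one: "supp N p B = 1"
  shows "contains_pauli N p (eef_class N B)"
proof -
  obtain k where k: "k \<in> supp_set N p B"
    using one by (auto simp: supp_eq_card_supp_set card_1_singleton_iff)
  then have kN: "k < N"
    by (simp add: supp_set_def)
  obtain gs where gs: "in_EN N gs" "aligned N p (act_word N gs B) k"
    using exists_local_word_aligning[OF B k] by blast
  define B' where "B' = act_word N gs B"
  have B': "pauli_frame N B'"
    unfolding B'_def by (rule pauli_frame_act_word[OF B gs(1)])
  have aligned: "aligned N p B' k"
    using gs(2) by (simp add: B'_def)
  have "card (supp_set N p B') = 1"
    using one supp_act_word[OF B gs(1), of p] by (simp add: B'_def supp_eq_card_supp_set)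
  then obtain k' where "supp_set N p B' = {k'}"
    by (auto simp: card_1_singleton_iff)
  then have supp_set: "supp_set N p B' = {k}"
    using aligned_in_supp_set[OF aligned kN] by simp
  have "p = snd (B' k)"
  proof (rule pauli_eq_by_frame[OF B' p])
    show "snd (B' k) \<in> pauli_space N"
      using pauli_frame_in_pauli_space[OF B' kN] by simp
    fix l
    assume lN: "l < N"
    show "(symp N (fst (B' l)) p \<longleftrightarrow> symp N (fst (B' l)) (snd (B' k))) \<and>
          (symp N (snd (B' l)) p \<longleftrightarrow> symp N (snd (B' l)) (snd (B' k)))"
    proof (cases "l = k")
      case True
      then show ?thesis
        using aligned pauli_frame_symp[OF B' kN kN] by (simp add: aligned_def)
    next
      case False
      then have "l \<notin> supp_set N p B'"
        using supp_set by simp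
      then show ?thesis
        using False lN pauli_frame_symp[OF B' lN kN] by (simp add: supp_set_def)
    qed
  qed
  then show ?thesis
    using kN act_word_in_eef_class[OF gs(1)] unfolding contains_pauli_def B'_def by blast
qed

lemma pauli_frame_eef_class: "pauli_frame N B \<Longrightarrow> B' \<in> eef_class N B \<Longrightarrow> pauli_frame N B'"
  unfolding eef_class_def by (auto simp: pauli_frame_act_word)

lemma cg_adj_eef_class_CX:
  assumes B: "pauli_frame N B" and gs: "in_EN N gs" and ab: "a < N" "b < N" "a \<noteq> b"
  shows "cg_adj N (eef_class N B) (eef_class N (back_act N (CX a b) (act_word N gs B)))"
  unfolding cg_adj_def
proof (intro conjI)
  show "eef_class N B \<in> cg_vertices N"
    by (rule eef_class_in_cg_vertices[OF B])
  show "eef_class N (back_act N (CX a b) (act_word N gs B)) \<in> cg_vertices N"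
    by (rule eef_class_in_cg_vertices[OF pauli_frame_back_act_CX[OF pauli_frame_act_word[OF B gs] ab]])
  show "\<exists>B1 \<in> eef_class N B. \<exists>B2 \<in> eef_class N (back_act N (CX a b) (act_word N gs B)).
      \<exists>i<N. \<exists>j<N. i \<noteq> j \<and> B2 = back_act N (CX i j) B1"
    using ab act_word_in_eef_class[OF gs] mem_eef_class_self by blast
qed

lemma supp_le_Suc_if_cg_adj:
  assumes B: "pauli_frame N B" and adj: "cg_adj N (eef_class N B) C"
  obtains B0 where "pauli_frame N B0" "C = eef_class N B0" "supp N p B \<le> Suc (supp N p B0)"
proof -
  obtain B0 where B0: "pauli_frame N B0" "C = eef_class N B0"
    using adj unfolding cg_adj_def cg_vertices_def by blast
  obtain B1 B2 a b where B1: "B1 \<in> eef_class N B" and B2: "B2 \<in> C"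
    and ab: "a < N" "b < N" "a \<noteq> b" and edge: "B2 = back_act N (CX a b) B1"
    using adj unfolding cg_adj_def by blast
  have "supp N p B = supp N p B1"
    using supp_eef_class[OF B B1] by simp
  also have "\<dots> \<le> Suc (supp N p B2)"
    unfolding edge by (rule supp_le_Suc_supp_back_act_CX[OF pauli_frame_eef_class[OF B B1] ab])
  also have "supp N p B2 = supp N p B0"
    using supp_eef_class[OF B0(1)] B2 B0(2) by simp
  finally show ?thesis
    using B0 that by blast
qed

lemma cg_path_to_class_containing:
  assumes p: "p \<in> pauli_space N"
  shows "pauli_frame N B \<Longrightarrow> supp N p B = Suc m \<Longrightarrow>
    \<exists>C \<in> cg_vertices N. contains_pauli N p C \<and> (cg_adj N ^^ m) (eef_class N B) C"
proof (induction m arbitrary: B)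
  case 0
  then show ?case
    using contains_pauli_if_supp_eq_1[OF _ p] eef_class_in_cg_vertices by fastforce
next
  case (Suc m)
  obtain gs a b where step: "in_EN N gs" "a < N" "b < N" "a \<noteq> b"
      "Suc (supp N p (back_act N (CX a b) (act_word N gs B))) = supp N p B"
    using exists_CX_decreasing_supp[OF Suc.prems(1), of p] Suc.prems(2) by auto
  define B' where "B' = back_act N (CX a b) (act_word N gs B)"
  have B': "pauli_frame N B'"
    unfolding B'_def by (rule pauli_frame_back_act_CX[OF pauli_frame_act_word[OF Suc.prems(1) step(1)] step(2-4)])
  have "supp N p B' = Suc m"
    using step(5) Suc.prems(2) by (simp add: B'_def)
  then obtain C where C: "C \<in> cg_vertices N" "contains_pauli N p C" "(cg_adj N ^^ m) (eef_class N B') C"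
    using Suc.IH[OF B'] by blast
  have "cg_adj N (eef_class N B) (eef_class N B')"
    unfolding B'_def by (rule cg_adj_eef_class_CX[OF Suc.prems(1) step(1-4)])
  then have "(cg_adj N ^^ Suc m) (eef_class N B) C"
    using C(3) by (rule relpowp_Suc_I2)
  then show ?case
    using C(1,2) by blast
qed

lemma supp_le_Suc_if_cg_path:
  "pauli_frame N B \<Longrightarrow> (cg_adj N ^^ n) (eef_class N B) C \<Longrightarrow> contains_pauli N p C \<Longrightarrow>
    supp N p B \<le> Suc n"
proof (induction n arbitrary: B)
  case 0
  then show ?case
    using supp_le_1_if_contains_pauli by simp
next
  case (Suc n)
  obtain C' where adj: "cg_adj N (eef_class N B) C'" and path: "(cg_adj N ^^ n) C' C"
    using relpowp_Suc_D2[OF Suc.prems(2)] by blast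
  obtain B0 where "pauli_frame N B0" "C' = eef_class N B0" "supp N p B \<le> Suc (supp N p B0)"
    using supp_le_Suc_if_cg_adj[OF Suc.prems(1) adj] .
  then show ?case
    using Suc.IH path Suc.prems(3) by fastforce
qed

lemma INF_relpowp_eq:
  fixes R :: "'a \<Rightarrow> 'a \<Rightarrow> bool"
  assumes "y0 \<in> S" "(R ^^ m) x y0" and "\<And>y n. y \<in> S \<Longrightarrow> (R ^^ n) x y \<Longrightarrow> m \<le> n"
  shows "(INF y \<in> S. INF n \<in> {n. (R ^^ n) x y}. enat n) = enat m"
proof (rule antisym)
  show "(INF y \<in> S. INF n \<in> {n. (R ^^ n) x y}. enat n) \<le> enat m"
    using assms(1,2) by (intro INF_lower2[OF assms(1)] INF_lower) simp
  show "enat m \<le> (INF y \<in> S. INF n \<in> {n. (R ^^ n) x y}. enat n)"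
    using assms(3) by (intro INF_greatest) simp
qed

theorem proposition1:
  fixes N :: nat and p q :: pauli and B :: frame
  assumes "N \<ge> 1"
    and "p \<in> pauli_space N" and "q \<in> pauli_space N"
    and "pauli_frame N B"
  shows "(0 \<le> supp N p B \<and> (supp N p B = 0 \<longleftrightarrow> p = pzero)) \<and>
         supp N (padd p q) B \<le> supp N p B + supp N q B \<and>
         (\<forall>gs. in_EN N gs \<longrightarrow> supp N p (act_word N gs B) = supp N p B) \<and>
         (p \<noteq> pzero \<longrightarrow>
           enat (supp N p B - 1) =
           (INF C \<in> {C \<in> cg_vertices N. contains_pauli N p C}. cg_dist N (eef_class N B) C))"
proof (intro conjI impI allI)
  show "supp N p B = 0 \<longleftrightarrow> p = pzero"
    by (rule supp_eq_0_iff[OF assms(4,2)])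
  show "supp N (padd p q) B \<le> supp N p B + supp N q B"
    by (rule supp_padd_le)
  show "in_EN N gs \<Longrightarrow> supp N p (act_word N gs B) = supp N p B" for gs
    by (rule supp_act_word[OF assms(4)])
  assume "p \<noteq> pzero"
  then obtain m where m: "supp N p B = Suc m"
    using supp_eq_0_iff[OF assms(4,2)] not0_implies_Suc by blast
  then obtain C0 where "C0 \<in> cg_vertices N" "contains_pauli N p C0" "(cg_adj N ^^ m) (eef_class N B) C0"
    using cg_path_to_class_containing[OF assms(2,4)] by blast
  then have "(INF C \<in> {C \<in> cg_vertices N. contains_pauli N p C}.
      INF n \<in> {n. (cg_adj N ^^ n) (eef_class N B) C}. enat n) = enat m"
    using supp_le_Suc_if_cg_path[OF assms(4), of _ _ p] m by (intro INF_relpowp_eq[of C0]) fastforce+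
  then show "enat (supp N p B - 1) =
      (INF C \<in> {C \<in> cg_vertices N. contains_pauli N p C}. cg_dist N (eef_class N B) C)"
    by (simp add: cg_dist_def m)
qed simp

end
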